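(* Let $S$ be an inverse monoid which is either (a) $E^*$-unitary and $0$-bisimple, or (b) $E$-unitary and bisimple, and let $C$ be the right unit submonoid of $S$. Then $S$ is $F^*$-inverse in case (a) (respectively $F$-inverse in case (b)) if and only if the partially ordered set $P_r(C)$ of principal right ideals of $C$ is a join semilattice.
   Context: For an inverse monoid $S$, $E(S)$ denotes its set of idempotents and, if $S$ has a zero, $E^*(S)$ its nonzero idempotents. A subset $U$ is unitary if for $u\in U$, $s\in S$: $su\in U\Rightarrow s\in U$ and $us\in U\Rightarrow s\in U$. $S$ is $E$-unitary if $E(S)$ is unitary, and $E^*$-unitary if $E^*(S)$ is unitary. $S$ is bisimple if all its elements are $\mathscr{D}$-related, and $0$-bisimple (for $S$ with zero) if all its nonzero elements are $\mathscr{D}$-related. The right unit submonoid of $S$ is $\{s\in S: st=1 \text{ for some } t\in S\}$. The natural partial order is $a\le b$ iff $a=eb$ for some idempotent $e$; $S$ is $F^*$-inverse if every nonzero element lies beneath a unique maximal element, and $F$-inverse (for $S$ without zero) if every element lies beneath a unique maximal element. $P_r(C)$ is the set $\{aC : a\in C\}$ ordered by inclusion; a join semilattice is a poset in which any two elements have a least upper bound. *)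

theory Defs
  imports Main
begin

text \<open>The inverse monoid S is the whole carrier of a type of class monoid_mult.\<close>

definition inverse_monoid :: "'a::monoid_mult itself \<Rightarrow> bool" where
  "inverse_monoid _ \<longleftrightarrow> (\<forall>a::'a. \<exists>!b. a * b * a = a \<and> b * a * b = b)"

definition idempotents :: "'a::monoid_mult set" ("E\<^sub>S") where
  "idempotents = {e. e * e = e}"

definition is_zero :: "'a::monoid_mult \<Rightarrow> bool" where
  "is_zero z \<longleftrightarrow> (\<forall>s. z * s = z \<and> s * z = z)"

definition unitary :: "'a::monoid_mult set \<Rightarrow> bool" where
  "unitary U \<longleftrightarrow> (\<forall>u\<in>U. \<forall>s. (s * u \<in> U \<longrightarrow> s \<in> U) \<and> (u * s \<in> U \<longrightarrow> s \<in> U))"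

definition E_unitary :: "'a::monoid_mult itself \<Rightarrow> bool" where
  "E_unitary _ \<longleftrightarrow> unitary (idempotents :: 'a set)"

definition Estar_unitary :: "'a::monoid_mult \<Rightarrow> bool" where
  "Estar_unitary z \<longleftrightarrow> unitary (idempotents - {z})"

definition green_R :: "'a::monoid_mult \<Rightarrow> 'a \<Rightarrow> bool" where
  "green_R a b \<longleftrightarrow> range (\<lambda>s. a * s) = range (\<lambda>s. b * s)"

definition green_L :: "'a::monoid_mult \<Rightarrow> 'a \<Rightarrow> bool" where
  "green_L a b \<longleftrightarrow> range (\<lambda>s. s * a) = range (\<lambda>s. s * b)"

definition green_D :: "'a::monoid_mult \<Rightarrow> 'a \<Rightarrow> bool" where
  "green_D a b \<longleftrightarrow> (\<exists>c. green_R a c \<and> green_L c b)"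

definition bisimple :: "'a::monoid_mult itself \<Rightarrow> bool" where
  "bisimple _ \<longleftrightarrow> (\<forall>a b :: 'a. green_D a b)"

definition zero_bisimple :: "'a::monoid_mult \<Rightarrow> bool" where
  "zero_bisimple z \<longleftrightarrow> (\<forall>a b. a \<noteq> z \<longrightarrow> b \<noteq> z \<longrightarrow> green_D a b)"

definition right_units :: "'a::monoid_mult set" where
  "right_units = {s. \<exists>t. s * t = 1}"

definition nat_le :: "'a::monoid_mult \<Rightarrow> 'a \<Rightarrow> bool" where
  "nat_le a b \<longleftrightarrow> (\<exists>e\<in>idempotents. a = e * b)"

definition nat_maximal :: "'a::monoid_mult \<Rightarrow> bool" where
  "nat_maximal m \<longleftrightarrow> (\<forall>x. nat_le m x \<longrightarrow> x = m)"

definition F_star_inverse :: "'a::monoid_mult \<Rightarrow> bool" where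
  "F_star_inverse z \<longleftrightarrow> (\<forall>a. a \<noteq> z \<longrightarrow> (\<exists>!m. nat_maximal m \<and> nat_le a m))"

definition F_inverse :: "'a::monoid_mult itself \<Rightarrow> bool" where
  "F_inverse _ \<longleftrightarrow> (\<forall>a::'a. \<exists>!m. nat_maximal m \<and> nat_le a m)"

definition principal_right_ideals :: "'a::monoid_mult set \<Rightarrow> 'a set set" where
  "principal_right_ideals C = {(\<lambda>c. a * c) ` C | a. a \<in> C}"

definition join_semilattice_sets :: "'b set set \<Rightarrow> bool" where
  "join_semilattice_sets P \<longleftrightarrow>
     (\<forall>X\<in>P. \<forall>Y\<in>P. \<exists>Z\<in>P. X \<subseteq> Z \<and> Y \<subseteq> Z \<and> (\<forall>W\<in>P. X \<subseteq> W \<and> Y \<subseteq> W \<longrightarrow> Z \<subseteq> W))"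

end

theory Submission imports Defs begin

text \<open>Let N be the nonzero elements (case (a)) or all elements (case (b)) and C the right
units. Since every s \<in> N is D-related to 1, it has the form a\<inverse>b with a, b \<in> C, and for
a, b, c, d \<in> C one has a\<inverse>b \<le> c\<inverse>d exactly when a = kc and b = kd for the right unit k = ac\<inverse>.
Hence if c\<inverse>d is the greatest element above a\<inverse>b, then kC is the least principal right ideal
containing aC and bC. Conversely, if kC is that join, with a = kc and b = kd, then c\<inverse>d is
greatest above a\<inverse>b; here the (E*-)unitary hypothesis provides the left cancellation
uc = uc' \<Longrightarrow> c = c' for nonzero uc and c, c' \<in> C. Finally, a unique maximal element above every
element of N amounts to a greatest element above it, as N is closed upwards.\<close>

lemma one_in_right_units: "1 \<in> right_units"
  by (simp add: right_units_def)

lemma right_units_mult: "a \<in> right_units \<Longrightarrow> b \<in> right_units \<Longrightarrow> a * b \<in> right_units"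
proof -
  assume "a \<in> right_units" "b \<in> right_units"
  then obtain t u where "a * t = 1" "b * u = 1" by (auto simp: right_units_def)
  hence "(a * b) * (u * t) = 1" by (simp add: mult.assoc mult.assoc[symmetric, of b u t])
  thus ?thesis by (auto simp: right_units_def)
qed

locale inverse_monoid_inv =
  fixes inv :: "'a::monoid_mult \<Rightarrow> 'a"
  assumes inv1: "a * inv a * a = a" and inv2: "inv a * a * inv a = inv a"
    and inv_unique: "a * b * a = a \<Longrightarrow> b * a * b = b \<Longrightarrow> b = inv a"
begin

lemma inv_inv [simp]: "inv (inv a) = a"
  using inv_unique[of "inv a" a] inv1 inv2 by (simp add: mult.assoc)

lemma inv_idem: "e * e = e \<Longrightarrow> inv e = e"
  using inv_unique[of e e] by simp

lemma idem_inv_mult: "(inv a * a) * (inv a * a) = inv a * a"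
  by (metis inv2 mult.assoc)

lemma idem_mult_inv: "(a * inv a) * (a * inv a) = a * inv a"
  by (metis inv1 mult.assoc)

text \<open>The inverse x of ef satisfies x = fxe, which makes x idempotent, hence ef = inv x = x.\<close>
lemma idem_mult:
  fixes e f :: 'a
  assumes e: "e * e = e" and f: "f * f = f"
  shows "(e * f) * (e * f) = e * f"
proof -
  define x where "x = inv (e * f)"
  have ee: "\<And>y. e * (e * y) = e * y" and ff: "\<And>y. f * (f * y) = f * y"
    using e f by (metis mult.assoc)+
  have x1: "e * f * x * (e * f) = e * f" and x2: "x * (e * f) * x = x"
    using inv1 inv2 x_def by auto
  have "e * f * (f * x * e) * (e * f) = e * (f * f) * x * (e * e) * f"
    by (simp add: mult.assoc)
  hence "e * f * (f * x * e) * (e * f) = e * f" using x1 e f by (simp add: mult.assoc)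
  moreover have "(f * x * e) * (e * f) * (f * x * e) = f * (x * (e * f) * x) * e"
    using e f by (simp add: mult.assoc ee ff)
  hence "(f * x * e) * (e * f) * (f * x * e) = f * x * e" using x2 by simp
  ultimately have fxe: "f * x * e = x" using inv_unique x_def by blast
  have "x * x = f * (x * (e * f) * x) * e" using fxe by (metis mult.assoc)
  hence xx: "x * x = x" using x2 fxe by simp
  hence "e * f = x" using inv_idem x_def by (metis inv_inv)
  thus ?thesis using xx by simp
qed

lemma idem_commute:
  fixes e f :: 'a
  assumes "e * e = e" "f * f = f"
  shows "e * f = f * e"
proof -
  have ef: "(e * f) * (e * f) = e * f" and fe: "(f * e) * (f * e) = f * e"
    using idem_mult assms by auto
  have "(e * f) * (f * e) * (e * f) = e * f" and "(f * e) * (e * f) * (f * e) = f * e"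
    using assms ef fe by (metis mult.assoc)+
  hence "f * e = inv (e * f)" by (rule inv_unique)
  thus ?thesis using inv_idem[OF ef] by simp
qed

lemma inv_mult: "inv (a * b) = inv b * inv a"
proof -
  have c: "(b * inv b) * (inv a * a) = (inv a * a) * (b * inv b)"
    using idem_commute idem_inv_mult idem_mult_inv by blast
  have "a * b * (inv b * inv a) * (a * b) = a * ((b * inv b) * (inv a * a)) * b"
    by (simp add: mult.assoc)
  also have "\<dots> = a * ((inv a * a) * (b * inv b)) * b" using c by simp
  also have "\<dots> = (a * inv a * a) * (b * inv b * b)" by (simp add: mult.assoc)
  finally have 1: "a * b * (inv b * inv a) * (a * b) = a * b" using inv1 by simp
  have "(inv b * inv a) * (a * b) * (inv b * inv a) = inv b * ((inv a * a) * (b * inv b)) * inv a"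
    by (simp add: mult.assoc)
  also have "\<dots> = inv b * ((b * inv b) * (inv a * a)) * inv a" using c by simp
  also have "\<dots> = (inv b * b * inv b) * (inv a * a * inv a)" by (simp add: mult.assoc)
  finally have 2: "(inv b * inv a) * (a * b) * (inv b * inv a) = inv b * inv a" using inv2 by simp
  from 1 2 show ?thesis using inv_unique by metis
qed

lemma nat_le_trans:
  fixes a :: 'a
  shows "nat_le a b \<Longrightarrow> nat_le b c \<Longrightarrow> nat_le a c"
proof -
  assume "nat_le a b" "nat_le b c"
  then obtain e f where e: "e * e = e" "a = e * b" and f: "f * f = f" "b = f * c"
    by (auto simp: nat_le_def idempotents_def)
  have "a = (e * f) * c" using e f by (simp add: mult.assoc)
  thus ?thesis unfolding nat_le_def idempotents_def using idem_mult[OF e(1) f(1)] by blast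
qed

lemma nat_le_antisym:
  fixes a :: 'a
  shows "nat_le a b \<Longrightarrow> nat_le b a \<Longrightarrow> a = b"
proof -
  assume "nat_le a b" "nat_le b a"
  then obtain e f where e: "e * e = e" "a = e * b" and f: "f * f = f" "b = f * a"
    by (auto simp: nat_le_def idempotents_def)
  have "b = f * (e * b)" using e f by simp
  also have "\<dots> = e * (f * b)" using idem_commute[OF e(1) f(1)] by (metis mult.assoc)
  also have "\<dots> = e * b" using f by (metis mult.assoc)
  finally show ?thesis using e by simp
qed

lemma nat_le_idem_left:
  assumes "nat_le x y"
  obtains e where "e * e = e" "x = e * y" "x * inv x = e * (y * inv y)"
proof -
  obtain e where e: "e * e = e" "x = e * y" using assms by (auto simp: nat_le_def idempotents_def)
  have c: "e * (y * inv y) = (y * inv y) * e" using idem_commute e idem_mult_inv by blast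
  have "x * inv x = e * (y * inv y) * e" using e inv_mult inv_idem by (simp add: mult.assoc)
  also have "\<dots> = e * (y * inv y)" using c e by (metis mult.assoc)
  finally show ?thesis using that e by blast
qed

lemma nat_le_eq: "nat_le a b \<Longrightarrow> a = a * inv a * b"
  by (erule nat_le_idem_left) (metis inv1 mult.assoc)

lemma nat_le_range_idem: "nat_le x y \<Longrightarrow> x * inv x * (y * inv y) = x * inv x"
  by (erule nat_le_idem_left) (metis idem_mult_inv mult.assoc)

lemma right_units_iff: "s \<in> right_units \<longleftrightarrow> s * inv s = 1"
proof
  assume "s \<in> right_units"
  then obtain t where t: "s * t = 1" by (auto simp: right_units_def)
  have "s * inv s = s * inv s * s * t" using t by (simp add: mult.assoc)
  thus "s * inv s = 1" using inv1 t by simp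
qed (auto simp: right_units_def)

lemma right_unit_cancel: "a \<in> right_units \<Longrightarrow> a * (inv a * x) = x"
  by (simp add: right_units_iff mult.assoc[symmetric])

lemma inv_mult_range_idem:
  "a \<in> right_units \<Longrightarrow> b \<in> right_units \<Longrightarrow> (inv a * b) * inv (inv a * b) = inv a * a"
  using right_units_iff[of b] inv_mult by (simp add: mult.assoc right_unit_cancel)

lemma nat_le_inv_mult_iff:
  assumes a: "a \<in> right_units" and b: "b \<in> right_units"
  shows "nat_le (inv a * b) t \<longleftrightarrow> a * t = b"
proof
  assume "nat_le (inv a * b) t"
  hence eq: "inv a * b = inv a * a * t"
    using nat_le_eq inv_mult_range_idem[OF a b] by metis
  have "b = a * (inv a * b)" using a right_unit_cancel by simp
  also have "\<dots> = (a * inv a * a) * t" using eq by (simp add: mult.assoc)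
  finally show "a * t = b" using inv1 by simp
next
  assume "a * t = b"
  hence "inv a * b = (inv a * a) * t" by (simp add: mult.assoc)
  thus "nat_le (inv a * b) t" unfolding nat_le_def idempotents_def using idem_inv_mult by blast
qed

lemma nat_le_inv_mult_factor:
  assumes a: "a \<in> right_units" and b: "b \<in> right_units"
    and c: "c \<in> right_units" and d: "d \<in> right_units"
    and le: "nat_le (inv a * b) (inv c * d)"
  shows "a * inv c \<in> right_units" "a = (a * inv c) * c" "b = (a * inv c) * d"
proof -
  have dom: "inv a * a * (inv c * c) = inv a * a"
    using nat_le_range_idem[OF le] inv_mult_range_idem a b c d by simp
  have "a = a * (inv a * a * (inv c * c))" using dom inv1 by (simp add: mult.assoc)
  thus kc: "a = (a * inv c) * c" using inv1 by (metis mult.assoc)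
  have "(a * inv c) * inv (a * inv c) = ((a * inv c) * c) * inv a"
    using inv_mult by (simp add: mult.assoc)
  thus "a * inv c \<in> right_units" using kc[symmetric] a right_units_iff by simp
  have "a * (inv c * d) = b" using le nat_le_inv_mult_iff[OF a b] by blast
  thus "b = (a * inv c) * d" by (simp add: mult.assoc)
qed

lemma green_D_one_decomp:
  assumes "green_D s 1"
  obtains p q where "p \<in> right_units" "q \<in> right_units" "s = inv p * q"
proof -
  obtain c where R: "green_R s c" and L: "green_L c 1" using assms green_D_def by blast
  from L have "1 \<in> range (\<lambda>x. x * c)" unfolding green_L_def by simp
  then obtain w where w: "1 = w * c" by auto
  have "inv c * c = w * (c * inv c * c)" by (metis w mult.assoc mult_1_left)
  hence cc: "inv c * c = 1" using inv1 w by simp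
  from R have "s \<in> range (\<lambda>x. c * x)" "c \<in> range (\<lambda>x. s * x)" unfolding green_R_def
    by (metis rangeI mult_1_right)+
  then obtain x y where x: "s = c * x" and y: "c = s * y" by auto
  have "inv c * s * inv (inv c * s) = inv c * (s * inv s * c)" using inv_mult by (simp add: mult.assoc)
  also have "s * inv s * c = c" using y inv1 by (metis mult.assoc)
  finally have "inv c * s \<in> right_units" using cc right_units_iff by simp
  moreover have "inv c \<in> right_units" using cc right_units_iff by simp
  moreover have "s = inv (inv c) * (inv c * s)" using x inv1 by (metis inv_inv mult.assoc)
  ultimately show thesis using that by blast
qed

abbreviation right_ideal :: "'a \<Rightarrow> 'a set" where
  "right_ideal a \<equiv> (\<lambda>c. a * c) ` right_units"

lemma right_ideal_subset_iff:
  assumes "a \<in> right_units" "u \<in> right_units"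
  shows "right_ideal a \<subseteq> right_ideal u \<longleftrightarrow> (\<exists>p\<in>right_units. a = u * p)"
proof
  assume "right_ideal a \<subseteq> right_ideal u"
  thus "\<exists>p\<in>right_units. a = u * p" using one_in_right_units by force
qed (auto simp: mult.assoc intro: right_units_mult)

end

definition is_join :: "'b set set \<Rightarrow> 'b set \<Rightarrow> 'b set \<Rightarrow> 'b set \<Rightarrow> bool" where
  "is_join P X Y Z \<longleftrightarrow> Z \<in> P \<and> X \<subseteq> Z \<and> Y \<subseteq> Z \<and> (\<forall>W\<in>P. X \<subseteq> W \<and> Y \<subseteq> W \<longrightarrow> Z \<subseteq> W)"

lemma join_semilattice_sets_iff: "join_semilattice_sets P \<longleftrightarrow> (\<forall>X\<in>P. \<forall>Y\<in>P. \<exists>Z. is_join P X Y Z)"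
  unfolding join_semilattice_sets_def is_join_def by blast

lemma join_semilattice_sets_subsingleton:
  "(\<And>X Y. X \<in> P \<Longrightarrow> Y \<in> P \<Longrightarrow> X = Y) \<Longrightarrow> join_semilattice_sets P"
  unfolding join_semilattice_sets_def by blast

text \<open>N is the set of nonzero elements, or the whole monoid when there is no zero.\<close>

locale bisimple_part = inverse_monoid_inv inv for inv :: "'a::monoid_mult \<Rightarrow> 'a" +
  fixes N :: "'a set"
  assumes N_factor: "x * y \<in> N \<Longrightarrow> x \<in> N \<and> y \<in> N"
    and one_in_N: "1 \<in> N"
    and N_green_D_one: "s \<in> N \<Longrightarrow> green_D s 1"
begin

lemma right_units_subset_N: "right_units \<subseteq> N"
proof
  fix a :: 'a assume "a \<in> right_units"
  hence "a * inv a \<in> N" using one_in_N right_units_iff by simp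
  thus "a \<in> N" using N_factor by blast
qed

lemma nat_le_N: "nat_le s t \<Longrightarrow> s \<in> N \<Longrightarrow> t \<in> N"
  unfolding nat_le_def using N_factor by blast

lemma inv_mult_right_units_N: "a \<in> right_units \<Longrightarrow> b \<in> right_units \<Longrightarrow> inv a * b \<in> N"
  using N_factor[of a "inv a * b"] right_units_subset_N right_unit_cancel by auto

lemma unique_maximal_iff_greatest:
  "(\<forall>s\<in>N. \<exists>!m. nat_maximal m \<and> nat_le s m) \<longleftrightarrow>
     (\<forall>s\<in>N. \<exists>m. nat_le s m \<and> (\<forall>t. nat_le s t \<longrightarrow> nat_le t m))"
proof (intro iffI ballI)
  fix s assume F: "\<forall>s\<in>N. \<exists>!m. nat_maximal m \<and> nat_le s m" and s: "s \<in> N"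
  then obtain m where m: "nat_maximal m" "nat_le s m" by blast
  have "nat_le t m" if st: "nat_le s t" for t
  proof -
    obtain m' where "nat_maximal m'" "nat_le t m'" using F nat_le_N[OF st s] by blast
    moreover from this have "m' = m" using F s m nat_le_trans[OF st] by blast
    ultimately show ?thesis by simp
  qed
  thus "\<exists>m. nat_le s m \<and> (\<forall>t. nat_le s t \<longrightarrow> nat_le t m)" using m by blast
next
  fix s assume "\<forall>s\<in>N. \<exists>m. nat_le s m \<and> (\<forall>t. nat_le s t \<longrightarrow> nat_le t m)" and "s \<in> N"
  then obtain m where m: "nat_le s m" "\<And>t. nat_le s t \<Longrightarrow> nat_le t m" by blast
  have "nat_maximal m"
    unfolding nat_maximal_def using m nat_le_trans nat_le_antisym by blast
  moreover have "m' = m" if "nat_maximal m'" "nat_le s m'" for m'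
    using that m(2) unfolding nat_maximal_def by blast
  ultimately show "\<exists>!m. nat_maximal m \<and> nat_le s m" using m(1) by blast
qed

lemma join_of_greatest:
  assumes a: "a \<in> right_units" and b: "b \<in> right_units"
    and m: "nat_le (inv a * b) m" and greatest: "\<And>t. nat_le (inv a * b) t \<Longrightarrow> nat_le t m"
  shows "\<exists>Z. is_join (principal_right_ideals right_units) (right_ideal a) (right_ideal b) Z"
proof -
  have "m \<in> N" using nat_le_N[OF m inv_mult_right_units_N[OF a b]] .
  then obtain c d where c: "c \<in> right_units" and d: "d \<in> right_units" and md: "m = inv c * d"
    using N_green_D_one green_D_one_decomp by blast
  define k where "k = a * inv c"
  have k: "k \<in> right_units" "a = k * c" "b = k * d"
    using nat_le_inv_mult_factor[OF a b c d] m unfolding md k_def by auto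
  have "right_ideal k \<subseteq> right_ideal u"
    if u: "u \<in> right_units" and au: "right_ideal a \<subseteq> right_ideal u"
      and bu: "right_ideal b \<subseteq> right_ideal u" for u
  proof -
    obtain p q where p: "p \<in> right_units" "a = u * p" and q: "q \<in> right_units" "b = u * q"
      using au bu right_ideal_subset_iff[OF a u] right_ideal_subset_iff[OF b u] by blast
    have "a * (inv p * q) = b" using p q right_unit_cancel[OF p(1)] by (simp add: mult.assoc)
    hence "nat_le (inv p * q) (inv c * d)"
      using greatest nat_le_inv_mult_iff[OF a b] md by blast
    hence "p * inv c \<in> right_units" using nat_le_inv_mult_factor[OF p(1) q(1) c d] by blast
    moreover have "k = u * (p * inv c)" unfolding k_def using p by (simp add: mult.assoc)
    ultimately show ?thesis using right_ideal_subset_iff[OF k(1) u] by blast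
  qed
  moreover have "right_ideal a \<subseteq> right_ideal k" "right_ideal b \<subseteq> right_ideal k"
    using right_ideal_subset_iff a b c d k by blast+
  ultimately have
    "is_join (principal_right_ideals right_units) (right_ideal a) (right_ideal b) (right_ideal k)"
    unfolding is_join_def principal_right_ideals_def using k(1) by blast
  thus ?thesis by blast
qed

context
  assumes unitary_N: "unitary (idempotents \<inter> N)"
begin

text \<open>With h the domain of uc = uc', one gets (c\<inverse>c') h = h with h a nonzero idempotent, so
c\<inverse>c' is an idempotent f by unitarity; then c' = cf and c = c'f give c = c'.\<close>
lemma right_units_left_cancel:
  assumes c: "c \<in> right_units" and c': "c' \<in> right_units"
    and eq: "u * c = u * c'" and N: "u * c \<in> N"
  shows "c = c'"
proof -
  define e where "e = inv u * u"
  define h where "h = inv (u * c) * (u * c)"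
  have cc: "c * inv c = 1" "c' * inv c' = 1" using c c' right_units_iff by auto
  have hE: "h \<in> idempotents" unfolding h_def idempotents_def using idem_inv_mult by simp
  have "u * c * h = u * c" unfolding h_def using inv1 by (simp add: mult.assoc)
  hence hN: "h \<in> N" using N_factor N by metis
  have h_eq: "\<And>x y. inv (u * x) * (u * y) = inv x * e * y"
    unfolding e_def using inv_mult by (simp add: mult.assoc)
  have h2: "h = inv c' * e * c'" unfolding h_def eq h_eq ..
  have h3: "h = inv c * e * c'" unfolding h_def using h_eq[of c c'] eq by simp
  have "inv c * c' * h = inv c * (c' * inv c') * e * c'"
    unfolding h2 by (simp add: mult.assoc)
  also have "\<dots> = h" using h3 cc by simp
  finally have "inv c * c' * h \<in> idempotents \<inter> N" using hE hN by simp
  hence "inv c * c' \<in> idempotents \<inter> N" using unitary_N hE hN unfolding unitary_def by blast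
  hence f: "(inv c * c') * (inv c * c') = inv c * c'" by (simp add: idempotents_def)
  have c'f: "c' = c * (inv c * c')" using cc by (simp add: mult.assoc[symmetric])
  have "inv c * c' = inv c' * c" using inv_idem[OF f] inv_mult by simp
  hence cf: "c = c' * (inv c * c')" using cc by (simp add: mult.assoc[symmetric])
  show ?thesis using cf c'f f by (metis mult.assoc)
qed

lemma greatest_of_join:
  assumes a: "a \<in> right_units" and b: "b \<in> right_units"
    and J: "is_join (principal_right_ideals right_units) (right_ideal a) (right_ideal b) Z"
  shows "\<exists>m. nat_le (inv a * b) m \<and> (\<forall>t. nat_le (inv a * b) t \<longrightarrow> nat_le t m)"
proof -
  obtain k where k: "k \<in> right_units" and Z: "Z = right_ideal k"
    using J unfolding is_join_def principal_right_ideals_def by blast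
  obtain c d where c: "c \<in> right_units" "a = k * c" and d: "d \<in> right_units" "b = k * d"
    using J right_ideal_subset_iff[OF a k] right_ideal_subset_iff[OF b k] unfolding Z is_join_def
    by blast
  have "nat_le t (inv c * d)" if st: "nat_le (inv a * b) t" for t
  proof -
    have "t \<in> N" using nat_le_N[OF st inv_mult_right_units_N[OF a b]] .
    then obtain p q where p: "p \<in> right_units" and q: "q \<in> right_units" and t: "t = inv p * q"
      using N_green_D_one green_D_one_decomp by blast
    define u where "u = a * inv p"
    have u: "u \<in> right_units" "a = u * p" "b = u * q"
      using nat_le_inv_mult_factor[OF a b p q] st unfolding t u_def by auto
    have "right_ideal u \<in> principal_right_ideals right_units"
      unfolding principal_right_ideals_def using u(1) by blast
    moreover have "right_ideal a \<subseteq> right_ideal u" "right_ideal b \<subseteq> right_ideal u"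
      using right_ideal_subset_iff u a b p q by blast+
    ultimately have "right_ideal k \<subseteq> right_ideal u" using J unfolding Z is_join_def by blast
    then obtain w where w: "w \<in> right_units" "k = u * w"
      using right_ideal_subset_iff[OF k u(1)] by blast
    have aN: "a \<in> N" and bN: "b \<in> N" using a b right_units_subset_N by auto
    have eqs: "u * p = u * (w * c)" "u * q = u * (w * d)" using u c d w by (simp_all add: mult.assoc)
    have "p = w * c"
      using right_units_left_cancel[OF p right_units_mult[OF w(1) c(1)] eqs(1)] u(2) aN by simp
    moreover have "q = w * d"
      using right_units_left_cancel[OF q right_units_mult[OF w(1) d(1)] eqs(2)] u(3) bN by simp
    ultimately have "p * (inv c * d) = q" using right_unit_cancel[OF c(1)] by (simp add: mult.assoc)
    thus ?thesis using nat_le_inv_mult_iff[OF p q] t by blast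
  qed
  moreover have "a * (inv c * d) = b" using c d right_unit_cancel[OF c(1)] by (simp add: mult.assoc)
  hence "nat_le (inv a * b) (inv c * d)" using nat_le_inv_mult_iff[OF a b] by blast
  ultimately show ?thesis by blast
qed

theorem unique_maximal_iff_join_semilattice:
  "(\<forall>s\<in>N. \<exists>!m. nat_maximal m \<and> nat_le s m) \<longleftrightarrow>
     join_semilattice_sets (principal_right_ideals (right_units :: 'a set))"
  unfolding unique_maximal_iff_greatest join_semilattice_sets_iff
proof (intro iffI ballI)
  fix X Y :: "'a set"
  assume greatest: "\<forall>s\<in>N. \<exists>m. nat_le s m \<and> (\<forall>t. nat_le s t \<longrightarrow> nat_le t m)"
    and "X \<in> principal_right_ideals right_units" "Y \<in> principal_right_ideals right_units"
  then obtain a b where a: "a \<in> right_units" "X = right_ideal a"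
    and b: "b \<in> right_units" "Y = right_ideal b"
    unfolding principal_right_ideals_def by blast
  show "\<exists>Z. is_join (principal_right_ideals right_units) X Y Z"
    using greatest inv_mult_right_units_N[OF a(1) b(1)] join_of_greatest[OF a(1) b(1)] a b by blast
next
  fix s
  assume join: "\<forall>X\<in>principal_right_ideals (right_units :: 'a set).
      \<forall>Y\<in>principal_right_ideals right_units. \<exists>Z. is_join (principal_right_ideals right_units) X Y Z" and "s \<in> N"
  then obtain a b where a: "a \<in> right_units" and b: "b \<in> right_units" and s: "s = inv a * b"
    using N_green_D_one green_D_one_decomp by blast
  have "right_ideal a \<in> principal_right_ideals right_units"
    and "right_ideal b \<in> principal_right_ideals right_units"
    unfolding principal_right_ideals_def using a b by blast+
  then obtain Z where "is_join (principal_right_ideals right_units) (right_ideal a) (right_ideal b) Z"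
    using join by blast
  thus "\<exists>m. nat_le s m \<and> (\<forall>t. nat_le s t \<longrightarrow> nat_le t m)"
    using greatest_of_join[OF a b] s by blast
qed

end

end

lemma inverse_monoid_inv_The:
  assumes "inverse_monoid TYPE('a::monoid_mult)"
  shows "inverse_monoid_inv (\<lambda>a::'a. THE b. a * b * a = a \<and> b * a * b = b)"
proof -
  have ex: "\<And>a::'a. \<exists>!b. a * b * a = a \<and> b * a * b = b"
    using assms unfolding inverse_monoid_def by blast
  show ?thesis by unfold_locales (use theI'[OF ex] ex in blast)+
qed

lemma F_star_inverse_join_semilattice_if_zero_one:
  assumes "is_zero (1::'a::monoid_mult)"
  shows "F_star_inverse (1::'a)"
    and "join_semilattice_sets (principal_right_ideals (right_units :: 'a set))"
proof -
  have trivial: "\<And>x y :: 'a. x = y" using assms unfolding is_zero_def by (metis mult_1_right)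
  thus "F_star_inverse (1::'a)" unfolding F_star_inverse_def by blast
  have "X = UNIV" if "X \<in> principal_right_ideals (right_units :: 'a set)" for X
    using that trivial[of _ "_ * 1"] one_in_right_units
    unfolding principal_right_ideals_def by blast
  thus "join_semilattice_sets (principal_right_ideals (right_units :: 'a set))"
    by (blast intro: join_semilattice_sets_subsingleton)
qed

theorem proposition4p3:
  fixes z :: "'a::monoid_mult"
  assumes "inverse_monoid TYPE('a)"
  shows "(is_zero z \<and> Estar_unitary z \<and> zero_bisimple z \<longrightarrow>
            (F_star_inverse z \<longleftrightarrow>
               join_semilattice_sets (principal_right_ideals (right_units :: 'a set))))
       \<and> (E_unitary TYPE('a) \<and> bisimple TYPE('a) \<longrightarrow>
            (F_inverse TYPE('a) \<longleftrightarrow>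
               join_semilattice_sets (principal_right_ideals (right_units :: 'a set))))"
proof -
  let ?inv = "\<lambda>a::'a. THE b. a * b * a = a \<and> b * a * b = b"
  interpret inverse_monoid_inv ?inv using assms by (rule inverse_monoid_inv_The)
  show ?thesis
  proof (intro conjI impI)
    assume A: "is_zero z \<and> Estar_unitary z \<and> zero_bisimple z"
    show "F_star_inverse z \<longleftrightarrow> join_semilattice_sets (principal_right_ideals (right_units :: 'a set))"
    proof (cases "z = 1")
      case True
      thus ?thesis using F_star_inverse_join_semilattice_if_zero_one A by blast
    next
      case False
      interpret bisimple_part ?inv "{x. x \<noteq> z}"
        using False A by unfold_locales (auto simp: is_zero_def zero_bisimple_def)
      show ?thesis
        using unique_maximal_iff_join_semilattice A
        unfolding F_star_inverse_def Estar_unitary_def by (simp add: set_diff_eq Int_def)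
    qed
  next
    assume A: "E_unitary TYPE('a) \<and> bisimple TYPE('a)"
    interpret bisimple_part ?inv UNIV
      using A by unfold_locales (auto simp: bisimple_def)
    show "F_inverse TYPE('a) \<longleftrightarrow> join_semilattice_sets (principal_right_ideals (right_units :: 'a set))"
      using unique_maximal_iff_join_semilattice A unfolding F_inverse_def E_unitary_def by simp
  qed
qed

end
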